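(* Let $s>0$, $r>0$, $L_\infty>0$, $L_0>0$, and let $\alpha,\beta$ satisfy $0<\alpha\le 1$, $0<\beta\le1$, with $n:=\alpha+\beta$. Assume $n\neq 1$ and $\alpha\neq 1$. Set $L_*:=L_\infty-L_0$. Let $k$ be a positive solution, defined on an interval containing $0$, of the Cauchy problem $$\dot k = s\left(L_\infty-L_*e^{-rt}\right)^{n-1}k^{\alpha}-rL_*e^{-rt}k,\qquad k(0)=k_0.$$ Then for all $t\ge 0$ in that interval $$k(t)=\left( e^{-(\alpha-1)L_*e^{-rt}}\left(k_0^{1-\alpha}e^{(\alpha-1)L_*}-(\alpha-1)\int_0^t\mathcal L(\tau)\,d\tau\right)\right)^{\frac{1}{1-\alpha}},$$ where $$\mathcal L(\tau):=\frac{s\left(L_\infty-L_*e^{-r\tau}\right)^{n}\exp\!\left[r\tau+(\alpha-1)L_*e^{-r\tau}\right]}{L_\infty\left(e^{r\tau}-1\right)+L_0}.$$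
   Context: $\dot{}$ denotes the derivative with respect to time $t$. The function $L(t)=L_\infty-L_*e^{-rt}$ (von Bertalanffy labor force) is positive for $t\ge 0$ under the given assumptions, and the equation comes from a Solow-Swan type model with Cobb-Douglas production $F(K,L)=K^\alpha L^\beta$. *)

theory Defs
  imports "HOL-Analysis.Analysis"
begin

end

theory Submission
  imports Defs
begin

(* The Solow-Swan equation is a Bernoulli equation  k' = p k^\<alpha> - b k.  With B' = b, the
   substitution  u = k^(1-\<alpha>) e^((1-\<alpha>) B)  turns it into  u' = (1-\<alpha>) p e^((1-\<alpha>) B),
   so u is an integral of the right-hand side and k is recovered as u^(1/(1-\<alpha>)) e^(-B).
   For the von Bertalanffy labour force one takes B t = -L* e^(-rt). *)

lemma bernoulli_integrating_factor_deriv: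
  fixes k p b B :: "real \<Rightarrow> real" and \<alpha> x :: real
  assumes k_pos: "k x > 0"
    and dk: "(k has_real_derivative (p x * k x powr \<alpha> - b x * k x)) (at x within S)"
    and dB: "(B has_real_derivative b x) (at x within S)"
  shows "((\<lambda>t. k t powr (1 - \<alpha>) * exp ((1 - \<alpha>) * B t)) has_real_derivative
           (1 - \<alpha>) * p x * exp ((1 - \<alpha>) * B x)) (at x within S)"
proof -
  define e where "e = exp ((1 - \<alpha>) * B x)"
  have "((\<lambda>t. k t powr (1 - \<alpha>) * exp ((1 - \<alpha>) * B t)) has_real_derivative
          (1 - \<alpha>) * (k x powr (- \<alpha>) * (p x * k x powr \<alpha> - b x * k x)) * e
          + k x powr (1 - \<alpha>) * (e * ((1 - \<alpha>) * b x))) (at x within S)"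
    using k_pos unfolding e_def by (auto intro!: derivative_eq_intros dk dB)
  also have "k x powr (- \<alpha>) * (p x * k x powr \<alpha> - b x * k x)
               = p x - b x * k x powr (1 - \<alpha>)"
    using k_pos powr_add [of "k x" "- \<alpha>" 1] by (simp add: right_diff_distrib powr_add [symmetric])
  finally show ?thesis
    unfolding e_def by (simp add: algebra_simps)
qed

lemma bernoulli_ode_solution:
  fixes k p b B :: "real \<Rightarrow> real" and \<alpha> a t :: real
  assumes "a \<le> t" "\<alpha> \<noteq> 1"
    and k_pos: "\<And>x. x \<in> {a..t} \<Longrightarrow> k x > 0"
    and dk: "\<And>x. x \<in> {a..t} \<Longrightarrow>
               (k has_real_derivative (p x * k x powr \<alpha> - b x * k x)) (at x within {a..t})"
    and dB: "\<And>x. x \<in> {a..t} \<Longrightarrow> (B has_real_derivative b x) (at x within {a..t})"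
  shows "k t = (exp (- (1 - \<alpha>) * B t) *
                 (k a powr (1 - \<alpha>) * exp ((1 - \<alpha>) * B a)
                  + (1 - \<alpha>) * integral {a..t} (\<lambda>\<tau>. p \<tau> * exp ((1 - \<alpha>) * B \<tau>))))
               powr (1 / (1 - \<alpha>))"
proof -
  define u where "u = (\<lambda>t. k t powr (1 - \<alpha>) * exp ((1 - \<alpha>) * B t))"
  have "((\<lambda>\<tau>. (1 - \<alpha>) * p \<tau> * exp ((1 - \<alpha>) * B \<tau>)) has_integral (u t - u a)) {a..t}"
    using \<open>a \<le> t\<close> k_pos dk dB unfolding u_def
    by (intro fundamental_theorem_of_calculus)
       (auto simp: has_real_derivative_iff_has_vector_derivative [symmetric]
             intro!: bernoulli_integrating_factor_deriv)
  then have "integral {a..t} (\<lambda>\<tau>. (1 - \<alpha>) * p \<tau> * exp ((1 - \<alpha>) * B \<tau>)) = u t - u a"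
    by (rule integral_unique)
  then have "(1 - \<alpha>) * integral {a..t} (\<lambda>\<tau>. p \<tau> * exp ((1 - \<alpha>) * B \<tau>)) = u t - u a"
    by (simp add: mult.assoc)
  then have "exp (- (1 - \<alpha>) * B t) *
               (k a powr (1 - \<alpha>) * exp ((1 - \<alpha>) * B a)
                + (1 - \<alpha>) * integral {a..t} (\<lambda>\<tau>. p \<tau> * exp ((1 - \<alpha>) * B \<tau>)))
             = k t powr (1 - \<alpha>)"
    by (simp add: u_def algebra_simps flip: exp_add)
  moreover have "k t = (k t powr (1 - \<alpha>)) powr (1 / (1 - \<alpha>))"
    using k_pos [of t] \<open>a \<le> t\<close> \<open>\<alpha> \<noteq> 1\<close> by (simp add: powr_powr)
  ultimately show ?thesis
    by simp
qed

lemma von_bertalanffy_pos: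
  fixes Linf L0 r \<tau> :: real
  assumes "Linf > 0" "L0 > 0" "r > 0" "\<tau> \<ge> 0"
  shows "Linf - (Linf - L0) * exp (- r * \<tau>) > 0"
proof (cases "Linf \<ge> L0")
  case True
  have "exp (- r * \<tau>) \<le> 1"
    using assms by simp
  then have "(Linf - L0) * exp (- r * \<tau>) \<le> Linf - L0"
    using True by (simp add: mult_left_le)
  then show ?thesis
    using assms by linarith
next
  case False
  then have "(Linf - L0) * exp (- r * \<tau>) < 0"
    by (simp add: mult_neg_pos)
  then show ?thesis
    using assms by linarith
qed

lemma solow_swan_integrand_eq:
  fixes s Linf L0 r \<alpha> n \<tau> :: real
  assumes "Linf > 0" "L0 > 0" "r > 0" "\<tau> \<ge> 0"
  shows "s * (Linf - (Linf - L0) * exp (- r * \<tau>)) powr n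
           * exp (r * \<tau> + (\<alpha> - 1) * (Linf - L0) * exp (- r * \<tau>))
           / (Linf * (exp (r * \<tau>) - 1) + L0)
         = s * (Linf - (Linf - L0) * exp (- r * \<tau>)) powr (n - 1)
           * exp ((1 - \<alpha>) * (- (Linf - L0) * exp (- r * \<tau>)))"
proof -
  define L where "L = Linf - (Linf - L0) * exp (- r * \<tau>)"
  have "L > 0"
    using von_bertalanffy_pos assms by (simp add: L_def)
  then have "L powr n = L powr (n - 1) * L"
    by (simp add: powr_diff)
  moreover have "Linf * (exp (r * \<tau>) - 1) + L0 = exp (r * \<tau>) * L"
    by (simp add: L_def algebra_simps flip: exp_add)
  moreover have "exp (r * \<tau> + (\<alpha> - 1) * (Linf - L0) * exp (- r * \<tau>))
                 = exp (r * \<tau>) * exp ((1 - \<alpha>) * (- (Linf - L0) * exp (- r * \<tau>)))"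
    by (simp add: algebra_simps flip: exp_add)
  ultimately show ?thesis
    using \<open>L > 0\<close> unfolding L_def [symmetric] by simp
qed

theorem theorem2:
  fixes s r Linf L0 \<alpha> \<beta> k0 :: real
    and k :: "real \<Rightarrow> real" and I :: "real set"
  assumes "s > 0" "r > 0" "Linf > 0" "L0 > 0"
    and "0 < \<alpha>" "\<alpha> \<le> 1" "0 < \<beta>" "\<beta> \<le> 1"
    and "\<alpha> + \<beta> \<noteq> 1" "\<alpha> \<noteq> 1"
    and "is_interval I" "0 \<in> I"
    and "\<And>t. t \<in> I \<Longrightarrow> k t > 0"
    and "\<And>t. t \<in> I \<Longrightarrow>
          (k has_real_derivative
             (s * (Linf - (Linf - L0) * exp (- r * t)) powr (\<alpha> + \<beta> - 1) * k t powr \<alpha>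
              - r * (Linf - L0) * exp (- r * t) * k t)) (at t within I)"
    and "k 0 = k0"
  shows "\<forall>t \<in> I. t \<ge> 0 \<longrightarrow>
    k t = (exp (- (\<alpha> - 1) * (Linf - L0) * exp (- r * t)) *
             (k0 powr (1 - \<alpha>) * exp ((\<alpha> - 1) * (Linf - L0))
              - (\<alpha> - 1) * integral {0..t} (\<lambda>\<tau>.
                  s * (Linf - (Linf - L0) * exp (- r * \<tau>)) powr (\<alpha> + \<beta>)
                    * exp (r * \<tau> + (\<alpha> - 1) * (Linf - L0) * exp (- r * \<tau>))
                  / (Linf * (exp (r * \<tau>) - 1) + L0))))
           powr (1 / (1 - \<alpha>))"
proof (intro ballI impI)
  fix t assume "t \<in> I" "t \<ge> 0"
  define B where "B \<tau> = - (Linf - L0) * exp (- r * \<tau>)" for \<tau>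
  define p where "p \<tau> = s * (Linf - (Linf - L0) * exp (- r * \<tau>)) powr (\<alpha> + \<beta> - 1)" for \<tau>
  have sub: "{0..t} \<subseteq> I"
    using assms(11,12) \<open>t \<in> I\<close> unfolding is_interval_1 by (meson atLeastAtMost_iff subsetI)
  have "k t = (exp (- (1 - \<alpha>) * B t) *
                 (k 0 powr (1 - \<alpha>) * exp ((1 - \<alpha>) * B 0)
                  + (1 - \<alpha>) * integral {0..t} (\<lambda>\<tau>. p \<tau> * exp ((1 - \<alpha>) * B \<tau>))))
               powr (1 / (1 - \<alpha>))"
  proof (rule bernoulli_ode_solution [where b = "\<lambda>\<tau>. r * (Linf - L0) * exp (- r * \<tau>)"])
    fix x assume "x \<in> {0..t}"
    then show "k x > 0"
      using sub assms(13) by blast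
    show "(k has_real_derivative (p x * k x powr \<alpha> - r * (Linf - L0) * exp (- r * x) * k x))
            (at x within {0..t})"
      using \<open>x \<in> {0..t}\<close> sub unfolding p_def by (blast intro: DERIV_subset assms(14))
    show "(B has_real_derivative r * (Linf - L0) * exp (- r * x)) (at x within {0..t})"
      unfolding B_def [abs_def] by (auto intro!: derivative_eq_intros simp: algebra_simps)
  qed (use \<open>t \<ge> 0\<close> \<open>\<alpha> \<noteq> 1\<close> in auto)
  moreover have "integral {0..t} (\<lambda>\<tau>. p \<tau> * exp ((1 - \<alpha>) * B \<tau>))
    = integral {0..t} (\<lambda>\<tau>. s * (Linf - (Linf - L0) * exp (- r * \<tau>)) powr (\<alpha> + \<beta>)
        * exp (r * \<tau> + (\<alpha> - 1) * (Linf - L0) * exp (- r * \<tau>)) / (Linf * (exp (r * \<tau>) - 1) + L0))"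
    using solow_swan_integrand_eq [OF assms(3,4,2)]
    by (intro integral_cong) (simp add: p_def B_def)
  ultimately show "k t = (exp (- (\<alpha> - 1) * (Linf - L0) * exp (- r * t)) *
             (k0 powr (1 - \<alpha>) * exp ((\<alpha> - 1) * (Linf - L0))
              - (\<alpha> - 1) * integral {0..t} (\<lambda>\<tau>.
                  s * (Linf - (Linf - L0) * exp (- r * \<tau>)) powr (\<alpha> + \<beta>)
                    * exp (r * \<tau> + (\<alpha> - 1) * (Linf - L0) * exp (- r * \<tau>))
                  / (Linf * (exp (r * \<tau>) - 1) + L0))))
           powr (1 / (1 - \<alpha>))"
    by (simp add: B_def assms(15) algebra_simps)
qed

end
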